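(* Consider the iterates $\{x(t)\}$ of the asynchronous network Newton method described in the context, with stepsize $\varepsilon$ satisfying $$0<\varepsilon\le 2\left(\frac{\lambda}{\Lambda}\right)^2 .$$ Then, with probability $1$, the sequence $\{F(x(t))\}$ converges to the optimal value $F^*=\min_{x\in\mathbb{R}^n}F(x)$.
   Context: Setup. Let $n\ge 1$ be the number of agents and $\alpha>0$ a scalar. $W\in\mathbb{R}^{n\times n}$ is a symmetric nonnegative matrix with $W\mathbb{1}=\mathbb{1}$ (where $\mathbb{1}$ is the all-ones vector), $\mathrm{null}(I-W)=\mathrm{span}\{\mathbb{1}\}$, $0\le W_{ij}<1$ for all $i,j$, and $\delta\le W_{ii}\le\Delta$ for all $i$, for constants $0<\delta\le\Delta<1$. Each $f_i:\mathbb{R}\to\mathbb{R}$ is twice continuously differentiable with $0<m\le f_i''(s)\le M<\infty$ for all $s$ and $|f_i''(a)-f_i''(b)|\le L|a-b|$ for all $a,b$. Define $F(x)=\frac12 x^T(I-W)x+\alpha\sum_{i=1}^n f_i(x_i)$ for $x\in\mathbb{R}^n$, with minimum value $F^*$ and minimizer $x^*$. Let $g(x)=\nabla F(x)$, $G(x)=\mathrm{diag}(f_1''(x_1),\dots,f_n''(x_n))$, $H(x)=\nabla^2F(x)=I-W+\alpha G(x)$. Let $W_d$ be the diagonal matrix with $[W_d]_{ii}=W_{ii}$, and set $D(x)=\alpha G(x)+2(I-W_d)$ (diagonal, positive definite) and $B=I-2W_d+W$, so $H(x)=D(x)-B$. Define the approximate Hessian inverse $\hat H(x)^{-1}=D(x)^{-1/2}\big(I+D(x)^{-1/2}BD(x)^{-1/2}\big)D(x)^{-1/2}$.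 Constants: $\rho=\frac{2(1-\delta)}{2(1-\delta)+\alpha m}$, $\Lambda=\frac{1+\rho}{2(1-\Delta)+\alpha m}$, $\lambda=\frac{1}{2(1-\delta)+\alpha M}$. Algorithm (asynchronous network Newton). Given $x(0)\in\mathbb{R}^n$ and stepsize $\varepsilon>0$, let $\Phi(1),\Phi(2),\dots$ be i.i.d. random diagonal $n\times n$ matrices, each equal to $e_ie_i^T$ (the matrix with a single $1$ in position $(i,i)$ and zeros elsewhere) with probability $1/n$ for each $i=1,\dots,n$ (i.e., one uniformly random agent is active per iteration). The iterates are $x(t)=x(t-1)-\varepsilon\,\Phi(t)\hat H(x(t-1))^{-1}g(x(t-1))$, $t\ge1$. Write $g(t)=g(x(t))$, $D(t)=D(x(t))$, $H(t)=H(x(t))$, $\hat H(t)^{-1}=\hat H(x(t))^{-1}$. $\mathcal{F}_t$ denotes the $\sigma$-field generated by $\Phi(1),\dots,\Phi(t)$ (so $x(t)$ is $\mathcal{F}_t$-measurable). *)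

theory Defs
  imports "HOL-Probability.Probability"
begin

text \<open>Asynchronous network Newton method. Agents are indexed by a finite type 'n,
  vectors live in real^'n and matrices in real^'n^'n.\<close>

definition onevec :: "real^'n" where
  "onevec = (\<chi> i. 1)"

definition diagm :: "('n \<Rightarrow> real) \<Rightarrow> real^'n^'n" where
  "diagm d = (\<chi> i j. if i = j then d i else 0)"

definition Fobj :: "real^'n^'n \<Rightarrow> real \<Rightarrow> ('n \<Rightarrow> real \<Rightarrow> real) \<Rightarrow> real^'n \<Rightarrow> real" where
  "Fobj W \<alpha> f x = (1/2) * (x \<bullet> ((mat 1 - W) *v x)) + \<alpha> * (\<Sum>i\<in>UNIV. f i (x $ i))"

text \<open>g(x) = grad F(x) = (I - W) x + alpha (f_i'(x_i))_i  (W symmetric); f1 i is f_i'.\<close>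
definition grad :: "real^'n^'n \<Rightarrow> real \<Rightarrow> ('n \<Rightarrow> real \<Rightarrow> real) \<Rightarrow> real^'n \<Rightarrow> real^'n" where
  "grad W \<alpha> f1 x = (mat 1 - W) *v x + \<alpha> *\<^sub>R (\<chi> i. f1 i (x $ i))"

text \<open>G(x) = diag(f_i''(x_i)); f2 i is f_i''.\<close>
definition Gmat :: "('n \<Rightarrow> real \<Rightarrow> real) \<Rightarrow> real^'n \<Rightarrow> real^'n^'n" where
  "Gmat f2 x = diagm (\<lambda>i. f2 i (x $ i))"

definition Wd :: "real^'n^'n \<Rightarrow> real^'n^'n" where
  "Wd W = diagm (\<lambda>i. W $ i $ i)"

definition Dmat :: "real^'n^'n \<Rightarrow> real \<Rightarrow> ('n \<Rightarrow> real \<Rightarrow> real) \<Rightarrow> real^'n \<Rightarrow> real^'n^'n" where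
  "Dmat W \<alpha> f2 x = \<alpha> *\<^sub>R Gmat f2 x + 2 *\<^sub>R (mat 1 - Wd W)"

definition Bmat :: "real^'n^'n \<Rightarrow> real^'n^'n" where
  "Bmat W = mat 1 - 2 *\<^sub>R Wd W + W"

definition Dinvsqrt :: "real^'n^'n \<Rightarrow> real \<Rightarrow> ('n \<Rightarrow> real \<Rightarrow> real) \<Rightarrow> real^'n \<Rightarrow> real^'n^'n" where
  "Dinvsqrt W \<alpha> f2 x = diagm (\<lambda>i. 1 / sqrt (Dmat W \<alpha> f2 x $ i $ i))"

definition Hhat_inv :: "real^'n^'n \<Rightarrow> real \<Rightarrow> ('n \<Rightarrow> real \<Rightarrow> real) \<Rightarrow> real^'n \<Rightarrow> real^'n^'n" where
  "Hhat_inv W \<alpha> f2 x =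
     Dinvsqrt W \<alpha> f2 x ** (mat 1 + Dinvsqrt W \<alpha> f2 x ** Bmat W ** Dinvsqrt W \<alpha> f2 x) ** Dinvsqrt W \<alpha> f2 x"

definition Phi :: "'n \<Rightarrow> real^'n^'n" where
  "Phi i = diagm (\<lambda>j. if j = i then 1 else 0)"

text \<open>Iterates: x(0) = x0, x(t+1) = x(t) - eps Phi(t+1) Hhat(x(t))^{-1} g(x(t)),
  where Phi(t+1) = e_{J t} e_{J t}^T (J t is the agent active at iteration t+1).\<close>
primrec ann_iter :: "real^'n^'n \<Rightarrow> real \<Rightarrow> ('n \<Rightarrow> real \<Rightarrow> real) \<Rightarrow> ('n \<Rightarrow> real \<Rightarrow> real)
    \<Rightarrow> real \<Rightarrow> real^'n \<Rightarrow> (nat \<Rightarrow> 'n) \<Rightarrow> nat \<Rightarrow> real^'n" where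
  "ann_iter W \<alpha> f1 f2 \<epsilon> x0 J 0 = x0"
| "ann_iter W \<alpha> f1 f2 \<epsilon> x0 J (Suc t) =
     ann_iter W \<alpha> f1 f2 \<epsilon> x0 J t
     - \<epsilon> *\<^sub>R ((Phi (J t) ** Hhat_inv W \<alpha> f2 (ann_iter W \<alpha> f1 f2 \<epsilon> x0 J t))
                *v grad W \<alpha> f1 (ann_iter W \<alpha> f1 f2 \<epsilon> x0 J t))"

definition rho_c :: "real \<Rightarrow> real \<Rightarrow> real \<Rightarrow> real" where
  "rho_c \<delta> \<alpha> m = 2 * (1 - \<delta>) / (2 * (1 - \<delta>) + \<alpha> * m)"

definition Lambda_c :: "real \<Rightarrow> real \<Rightarrow> real \<Rightarrow> real \<Rightarrow> real" where
  "Lambda_c \<delta> \<Delta> \<alpha> m = (1 + rho_c \<delta> \<alpha> m) / (2 * (1 - \<Delta>) + \<alpha> * m)"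

definition lambda_c :: "real \<Rightarrow> real \<Rightarrow> real \<Rightarrow> real" where
  "lambda_c \<delta> \<alpha> M = 1 / (2 * (1 - \<delta>) + \<alpha> * M)"

end

theory Submission
  imports Defs
begin

(* Every iteration changes a single coordinate i of x along the direction d = Hhat(x)^-1 g(x).
   Since lambda I <= Hhat^-1 <= Lambda I and F has curvature at most H = 1 - delta + alpha M along a
   coordinate, averaging the one-dimensional descent bound over the active agent decreases the mean
   optimality gap by the factor 1 - kappa/n per iteration: strong convexity gives
   F - F* <= |g|^2 / (2 alpha m), and |d|^2 <= Lambda g.d.  Summing over all activation sequences,
   the expected gap decays geometrically, so Markov's inequality and Borel-Cantelli show that the
   gap tends to 0 almost surely. *)

section \<open>Quadratic forms\<close>

lemma diagm_mult_left: "(diagm a ** A) $ i $ j = a i * A $ i $ j"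
proof -
  have "(diagm a ** A) $ i $ j = (\<Sum>k\<in>UNIV. if k = i then a i * A $ k $ j else 0)"
    unfolding matrix_matrix_mult_def diagm_def by (simp only: vec_lambda_beta, rule sum.cong, auto)
  then show ?thesis by simp
qed

lemma diagm_mult_right: "(A ** diagm a) $ i $ j = A $ i $ j * a j"
proof -
  have "(A ** diagm a) $ i $ j = (\<Sum>k\<in>UNIV. if k = j then A $ i $ k * a j else 0)"
    unfolding matrix_matrix_mult_def diagm_def by (simp only: vec_lambda_beta, rule sum.cong, auto)
  then show ?thesis by simp
qed

lemma transpose_eq_imp_symmetric: "transpose A = A \<Longrightarrow> \<forall>i j. A$i$j = A$j$i"
  by (metis transpose_def vec_lambda_beta)

lemma row_sums_eq_one: "A *v onevec = onevec \<Longrightarrow> \<forall>i. (\<Sum>j\<in>UNIV. A$i$j) = (1::real)"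
  by (metis (no_types, lifting) matrix_vector_mult_def onevec_def sum.cong mult_1_right vec_lambda_beta)

lemma inner_matrix_vector_mult:
  fixes u v :: "real^'n" and A :: "real^'n^'n"
  shows "u \<bullet> (A *v v) = (\<Sum>i\<in>UNIV. \<Sum>j\<in>UNIV. u$i * A$i$j * v$j)"
  by (simp add: inner_vec_def matrix_vector_mult_def sum_distrib_left mult.assoc)

lemma inner_matrix_vector_mult_commute:
  fixes u v :: "real^'n" and A :: "real^'n^'n"
  assumes "\<forall>i j. A$i$j = A$j$i"
  shows "u \<bullet> (A *v v) = v \<bullet> (A *v u)"
proof -
  have "u \<bullet> (A *v v) = (\<Sum>j\<in>UNIV. \<Sum>i\<in>UNIV. u$i * A$i$j * v$j)"
    unfolding inner_matrix_vector_mult by (rule sum.swap)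
  also have "\<dots> = v \<bullet> (A *v u)" unfolding inner_matrix_vector_mult using assms
    by (intro sum.cong refl) (simp add: mult.commute mult.left_commute)
  finally show ?thesis .
qed

lemma symmetric_form_abs_le:
  fixes V :: "'n::finite \<Rightarrow> 'n \<Rightarrow> real" and w :: "real^'n"
  assumes sym: "\<And>i j. V i j = V j i" and nonneg: "\<And>i j. 0 \<le> V i j"
  shows "\<bar>\<Sum>i\<in>UNIV. \<Sum>j\<in>UNIV. V i j * (w$i * w$j)\<bar>
    \<le> (\<Sum>i\<in>UNIV. (\<Sum>j\<in>UNIV. V i j) * (w$i)\<^sup>2)"
    (is "\<bar>?S\<bar> \<le> ?D")
proof -
  have D: "?D = (\<Sum>i\<in>UNIV. \<Sum>j\<in>UNIV. V i j * (w$i)\<^sup>2)"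
    by (simp add: sum_distrib_right)
  have D': "?D = (\<Sum>i\<in>UNIV. \<Sum>j\<in>UNIV. V i j * (w$j)\<^sup>2)"
    unfolding D by (subst sum.swap) (simp add: sym)
  have plus: "(\<Sum>i\<in>UNIV. \<Sum>j\<in>UNIV. V i j * (w$i + w$j)\<^sup>2) = 2 * ?D + 2 * ?S"
    unfolding mult_2 by (subst (1) D, subst D')
      (simp add: sum.distrib[symmetric] algebra_simps power2_eq_square)
  have minus: "(\<Sum>i\<in>UNIV. \<Sum>j\<in>UNIV. V i j * (w$i - w$j)\<^sup>2) = 2 * ?D - 2 * ?S"
    unfolding mult_2 by (subst (1) D, subst D')
      (simp add: sum.distrib[symmetric] sum_subtractf[symmetric] algebra_simps power2_eq_square)
  have "0 \<le> (\<Sum>i\<in>UNIV. \<Sum>j\<in>UNIV. V i j * (w$i + w$j)\<^sup>2)"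
    and "0 \<le> (\<Sum>i\<in>UNIV. \<Sum>j\<in>UNIV. V i j * (w$i - w$j)\<^sup>2)"
    using nonneg by (intro sum_nonneg mult_nonneg_nonneg; simp)+
  then show ?thesis unfolding plus minus by linarith
qed

lemma laplacian_form_nonneg:
  fixes W :: "real^'n^'n" and h :: "real^'n"
  assumes sym: "\<forall>i j. W$i$j = W$j$i" and nonneg: "\<forall>i j. 0 \<le> W$i$j"
    and row: "\<forall>i. (\<Sum>j\<in>UNIV. W$i$j) = 1"
  shows "0 \<le> h \<bullet> ((mat 1 - W) *v h)"
proof -
  have "h \<bullet> (W *v h) = (\<Sum>i\<in>UNIV. \<Sum>j\<in>UNIV. W$i$j * (h$i * h$j))"
    unfolding inner_matrix_vector_mult by (intro sum.cong refl) (simp add: algebra_simps)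
  also have "\<dots> \<le> (\<Sum>i\<in>UNIV. (\<Sum>j\<in>UNIV. W$i$j) * (h$i)\<^sup>2)"
    using symmetric_form_abs_le[of "\<lambda>i j. W$i$j" h] sym nonneg by simp
  also have "\<dots> = h \<bullet> h" using row by (simp add: inner_vec_def power2_eq_square)
  finally show ?thesis by (simp add: matrix_vector_mult_diff_rdistrib inner_diff_right)
qed

lemma Bmat_entry: "Bmat W $ i $ j = (if i = j then 1 - 2 * W $ i $ i else 0) + W $ i $ j"
  by (simp add: Bmat_def Wd_def diagm_def mat_def)

lemma Bmat_form_bounds:
  fixes W :: "real^'n^'n" and w :: "real^'n"
  assumes sym: "\<forall>i j. W$i$j = W$j$i" and nonneg: "\<forall>i j. 0 \<le> W$i$j"
    and row: "\<forall>i. (\<Sum>j\<in>UNIV. W$i$j) = 1"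
  shows "0 \<le> w \<bullet> (Bmat W *v w)"
    and "w \<bullet> (Bmat W *v w) \<le> 2 * (\<Sum>i\<in>UNIV. (1 - W$i$i) * (w$i)\<^sup>2)"
proof -
  define V where "V i j = (if i = j then 0 else W$i$j)" for i j
  define S where "S = (\<Sum>i\<in>UNIV. \<Sum>j\<in>UNIV. V i j * (w$i * w$j))"
  define D where "D = (\<Sum>i\<in>UNIV. (1 - W$i$i) * (w$i)\<^sup>2)"
  have V_row: "(\<Sum>j\<in>UNIV. V i j) = 1 - W$i$i" for i
  proof -
    have "(\<Sum>j\<in>UNIV. W$i$j) = (\<Sum>j\<in>UNIV. V i j + (if j = i then W$i$i else 0))"
      by (intro sum.cong refl) (auto simp: V_def)
    then show ?thesis using row by (simp add: sum.distrib)
  qed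
  have "\<bar>S\<bar> \<le> D"
    using symmetric_form_abs_le[of V w] sym nonneg unfolding S_def D_def V_row
    by (simp add: V_def)
  moreover have "w \<bullet> (Bmat W *v w) = D + S"
  proof -
    have "w \<bullet> (Bmat W *v w) = (\<Sum>i\<in>UNIV. \<Sum>j\<in>UNIV.
        (if j = i then (1 - W$i$i) * (w$i)\<^sup>2 else 0) + V i j * (w$i * w$j))"
      unfolding inner_matrix_vector_mult Bmat_entry
      by (intro sum.cong refl) (auto simp: V_def algebra_simps power2_eq_square)
    then show ?thesis unfolding S_def D_def by (simp add: sum.distrib)
  qed
  ultimately show "0 \<le> w \<bullet> (Bmat W *v w)" and "w \<bullet> (Bmat W *v w) \<le> 2 * D"
    by linarith+
qed

lemma inner_mult_le_form:
  fixes A :: "real^'n^'n" and g :: "real^'n" and \<Lambda> :: real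
  assumes sym: "\<forall>i j. A$i$j = A$j$i" and psd: "\<forall>u. 0 \<le> u \<bullet> (A *v u)"
    and le: "\<forall>u. u \<bullet> (A *v u) \<le> \<Lambda> * (u \<bullet> u)" and pos: "0 < \<Lambda>"
  shows "(A *v g) \<bullet> (A *v g) \<le> \<Lambda> * (g \<bullet> (A *v g))"
proof -
  define d where "d = A *v g"
  define c where "c = 1 / \<Lambda>"
  have gAd: "g \<bullet> (A *v d) = d \<bullet> d"
    using inner_matrix_vector_mult_commute[OF sym, of g d] by (simp add: d_def)
  \<comment> \<open>positivity of the form at g - d / \<Lambda>\<close>
  have "0 \<le> (g - c *\<^sub>R d) \<bullet> (A *v (g - c *\<^sub>R d))" using psd by blast
  also have "\<dots> = g \<bullet> d - 2 * c * (d \<bullet> d) + c\<^sup>2 * (d \<bullet> (A *v d))"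
    using gAd by (simp add: d_def matrix_vector_mult_diff_distrib matrix_vector_mult_scaleR
        inner_diff_left inner_diff_right inner_commute power2_eq_square algebra_simps)
  also have "\<dots> \<le> g \<bullet> d - 2 * c * (d \<bullet> d) + c\<^sup>2 * (\<Lambda> * (d \<bullet> d))"
    using le by (intro add_left_mono mult_left_mono) auto
  also have "\<dots> = g \<bullet> d - (d \<bullet> d) / \<Lambda>"
    using pos by (simp add: c_def power2_eq_square field_simps)
  finally show ?thesis using pos by (simp add: d_def field_simps inner_commute)
qed

section \<open>The approximate Hessian inverse\<close>

definition Ddiag :: "real^'n^'n \<Rightarrow> real \<Rightarrow> ('n \<Rightarrow> real \<Rightarrow> real) \<Rightarrow> real^'n \<Rightarrow> 'n \<Rightarrow> real" where
  "Ddiag W \<alpha> f2 x i = \<alpha> * f2 i (x $ i) + 2 * (1 - W $ i $ i)"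

lemma Dmat_entry: "Dmat W \<alpha> f2 x $ i $ j = (if i = j then Ddiag W \<alpha> f2 x i else 0)"
  by (simp add: Dmat_def Ddiag_def Gmat_def Wd_def diagm_def mat_def)

lemma Hhat_inv_entry:
  assumes "\<And>i. 0 < Ddiag W \<alpha> f2 x i"
  shows "Hhat_inv W \<alpha> f2 x $ i $ j = (if i = j then 1 / Ddiag W \<alpha> f2 x i else 0)
      + Bmat W $ i $ j / (Ddiag W \<alpha> f2 x i * Ddiag W \<alpha> f2 x j)"
proof -
  have Dinvsqrt: "Dinvsqrt W \<alpha> f2 x = diagm (\<lambda>i. 1 / sqrt (Ddiag W \<alpha> f2 x i))"
    by (simp add: Dinvsqrt_def Dmat_entry)
  have sq: "1 / sqrt (Ddiag W \<alpha> f2 x i) * (1 / sqrt (Ddiag W \<alpha> f2 x i)) = 1 / Ddiag W \<alpha> f2 x i"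
    for i using assms[of i] by simp
  show ?thesis
    unfolding Hhat_inv_def Dinvsqrt using sq[of i] sq[of j]
    by (simp add: diagm_mult_left diagm_mult_right mat_def algebra_simps)
qed

lemma Hhat_inv_form:
  fixes W :: "real^'n^'n" and \<alpha> :: real and f2 :: "'n \<Rightarrow> real \<Rightarrow> real" and x u :: "real^'n"
  defines "D \<equiv> Ddiag W \<alpha> f2 x"
  assumes pos: "\<And>i. 0 < D i"
  shows "u \<bullet> (Hhat_inv W \<alpha> f2 x *v u)
    = (\<Sum>i\<in>UNIV. (u$i)\<^sup>2 / D i) + (\<chi> i. u$i / D i) \<bullet> (Bmat W *v (\<chi> i. u$i / D i))"
proof -
  have "u \<bullet> (Hhat_inv W \<alpha> f2 x *v u) = (\<Sum>i\<in>UNIV. \<Sum>j\<in>UNIV.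
      (if i = j then (u$i)\<^sup>2 / D i else 0) + (u$i / D i) * Bmat W $i$j * (u$j / D j))"
    unfolding inner_matrix_vector_mult Hhat_inv_entry[OF pos[unfolded D_def]] D_def[symmetric]
    using pos by (intro sum.cong refl) (auto simp: field_simps power2_eq_square)
  then show ?thesis
    unfolding inner_matrix_vector_mult by (simp add: sum.distrib)
qed

section \<open>The objective along coordinates\<close>

lemma Taylor_second_order:
  fixes f f1 f2 :: "real \<Rightarrow> real"
  assumes "\<And>s. (f has_real_derivative f1 s) (at s)" and "\<And>s. (f1 has_real_derivative f2 s) (at s)"
  obtains t where "f b = f a + f1 a * (b - a) + f2 t / 2 * (b - a)\<^sup>2"
proof (cases "b = a")
  case False
  define diff where "diff k = (if k = 0 then f else if k = 1 then f1 else f2)" for k :: nat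
  have "\<exists>t. (if b < a then b < t \<and> t < a else a < t \<and> t < b) \<and>
    f b = (\<Sum>k<2. diff k a / fact k * (b - a) ^ k) + diff 2 t / fact 2 * (b - a)\<^sup>2"
    using assms False
    by (intro Taylor[of 2 diff f "min a b" "max a b"]) (auto simp: diff_def less_2_cases_iff)
  then obtain t where "f b = (\<Sum>k<2. diff k a / fact k * (b - a) ^ k) + diff 2 t / fact 2 * (b - a)\<^sup>2"
    by blast
  then show ?thesis by (intro that[of t]) (simp add: diff_def numeral_2_eq_2 lessThan_Suc)
qed (use that in simp)

lemma Fobj_add_axis:
  fixes W :: "real^'n^'n" and x :: "real^'n"
  assumes sym: "\<forall>i j. W$i$j = W$j$i"
  shows "Fobj W \<alpha> f (x + \<tau> *\<^sub>R axis i 1) = Fobj W \<alpha> f x + \<tau> * ((mat 1 - W) *v x) $ i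
     + \<tau>\<^sup>2 / 2 * (1 - W$i$i) + \<alpha> * (f i (x$i + \<tau>) - f i (x$i))"
proof -
  define Q where "Q = mat 1 - W"
  define e where "e = axis i (1::real)"
  have Q_sym: "\<forall>i j. Q$i$j = Q$j$i" using sym by (simp add: Q_def mat_def)
  have eQx: "e \<bullet> (Q *v x) = (Q *v x) $ i" by (simp add: e_def inner_axis')
  have eQe: "e \<bullet> (Q *v e) = 1 - W$i$i"
  proof -
    have "e \<bullet> (Q *v e) = (Q *v e) $ i" by (simp add: e_def inner_axis')
    also have "\<dots> = (\<Sum>j\<in>UNIV. if j = i then Q$i$j else 0)"
      unfolding matrix_vector_mult_def e_def axis_def
      by (simp only: vec_lambda_beta, rule sum.cong, auto)
    finally show ?thesis by (simp add: Q_def mat_def)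
  qed
  have quad: "(x + \<tau> *\<^sub>R e) \<bullet> (Q *v (x + \<tau> *\<^sub>R e))
      = x \<bullet> (Q *v x) + 2 * \<tau> * (Q *v x) $ i + \<tau>\<^sup>2 * (1 - W$i$i)"
  proof -
    have "(x + \<tau> *\<^sub>R e) \<bullet> (Q *v (x + \<tau> *\<^sub>R e))
        = x \<bullet> (Q *v x) + \<tau> * (x \<bullet> (Q *v e)) + \<tau> * (e \<bullet> (Q *v x)) + \<tau>\<^sup>2 * (e \<bullet> (Q *v e))"
      by (simp add: matrix_vector_right_distrib matrix_vector_mult_scaleR inner_add_left
          inner_add_right power2_eq_square algebra_simps)
    then show ?thesis
      unfolding inner_matrix_vector_mult_commute[OF Q_sym, of x e] eQx eQe by simp
  qed
  have "(\<Sum>k\<in>UNIV. f k ((x + \<tau> *\<^sub>R e) $ k))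
      = (\<Sum>k\<in>UNIV. f k (x $ k) + (if k = i then f i (x$i + \<tau>) - f i (x$i) else 0))"
    by (rule sum.cong) (auto simp: e_def axis_def)
  then have sums: "(\<Sum>k\<in>UNIV. f k ((x + \<tau> *\<^sub>R e) $ k))
      = (\<Sum>k\<in>UNIV. f k (x $ k)) + (f i (x$i + \<tau>) - f i (x$i))"
    by (simp add: sum.distrib)
  show ?thesis
    unfolding Fobj_def Q_def[symmetric] e_def[symmetric] quad sums by (simp add: field_simps)
qed

lemma Phi_mult_vector: "(Phi i ** A) *v v = (A *v v) $ i *\<^sub>R axis i (1::real)"
proof -
  have "(Phi i *v (A *v v)) $ k = ((A *v v) $ i *\<^sub>R axis i 1) $ k" for k
  proof -
    have "(Phi i *v (A *v v)) $ k = (\<Sum>j\<in>UNIV. if j = k \<and> k = i then (A *v v) $ j else 0)"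
      unfolding matrix_vector_mult_def Phi_def diagm_def
      by (simp only: vec_lambda_beta, rule sum.cong, auto)
    then show ?thesis by (auto simp: axis_def)
  qed
  then show ?thesis by (simp add: matrix_vector_mul_assoc[symmetric] vec_eq_iff)
qed

section \<open>Almost sure convergence from path averages\<close>

definition index_paths :: "nat \<Rightarrow> (nat \<Rightarrow> 'n) set" where
  "index_paths t = {..<t} \<rightarrow>\<^sub>E UNIV"

lemma finite_index_paths: "finite (index_paths t :: (nat \<Rightarrow> 'n::finite) set)"
  unfolding index_paths_def by (intro finite_PiE) auto

lemma restrict_mem_index_paths: "restrict p {..<t} \<in> index_paths t"
  unfolding index_paths_def by auto

lemma sum_index_paths_0: "(\<Sum>p\<in>index_paths 0. h p) = h (\<lambda>_. undefined)"
  unfolding index_paths_def by (simp add: PiE_empty_domain)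

lemma sum_index_paths_Suc:
  "(\<Sum>p\<in>index_paths (Suc t). h p) = (\<Sum>p\<in>index_paths t. \<Sum>i\<in>UNIV. h (p(t := i)))"
proof -
  have eq: "index_paths (Suc t) = (\<lambda>(i, p). p(t := i)) ` (UNIV \<times> index_paths t)"
    unfolding index_paths_def lessThan_Suc by (rule PiE_insert_eq)
  have "inj_on (\<lambda>(i, p). p(t := i)) (UNIV \<times> index_paths t)"
  proof (rule inj_onI, clarsimp)
    fix i p i' p'
    assume p: "p \<in> index_paths t" and p': "p' \<in> index_paths t" and e: "p(t := i) = p'(t := i')"
    have "p s = p' s" for s
    proof (cases "s < t")
      case True then show ?thesis using fun_cong[OF e, of s] by simp
    next
      case False then show ?thesis using p p' by (auto simp: index_paths_def PiE_def extensional_def)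
    qed
    then show "i = i' \<and> p = p'" using fun_cong[OF e, of t] by auto
  qed
  then have "(\<Sum>p\<in>index_paths (Suc t). h p) = (\<Sum>(i, p)\<in>UNIV \<times> index_paths t. h (p(t := i)))"
    unfolding eq by (subst sum.reindex) (simp_all add: case_prod_beta)
  also have "\<dots> = (\<Sum>p\<in>index_paths t. \<Sum>i\<in>UNIV. h (p(t := i)))"
    by (subst sum.cartesian_product[symmetric]) (rule sum.swap)
  finally show ?thesis .
qed

lemma (in prob_space) prefix_event:
  fixes J :: "nat \<Rightarrow> 'a \<Rightarrow> 'n::finite"
  assumes indep: "indep_vars (\<lambda>_. count_space UNIV) J UNIV"
    and unif: "\<And>t i. prob {\<omega> \<in> space M. J t \<omega> = i} = 1 / real CARD('n)"
  shows "{\<omega> \<in> space M. \<forall>s<t. J s \<omega> = p s} \<in> events"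
    and "prob {\<omega> \<in> space M. \<forall>s<t. J s \<omega> = p s} = (1 / real CARD('n)) ^ t"
proof -
  have meas: "J s \<in> measurable M (count_space UNIV)" for s
    using indep unfolding indep_vars_def2 by auto
  have indep_sets: "indep_sets (\<lambda>s. {J s -` A \<inter> space M | A. A \<in> sets (count_space UNIV)}) UNIV"
    using indep unfolding indep_vars_def2 by auto
  show "{\<omega> \<in> space M. \<forall>s<t. J s \<omega> = p s} \<in> events"
    using meas by measurable
  show "prob {\<omega> \<in> space M. \<forall>s<t. J s \<omega> = p s} = (1 / real CARD('n)) ^ t"
  proof (cases "t = 0")
    case True
    then show ?thesis by (simp add: prob_space)
  next
    case False
    have "{\<omega> \<in> space M. \<forall>s<t. J s \<omega> = p s} = (\<Inter>s\<in>{..<t}. J s -` {p s} \<inter> space M)"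
      using False by auto
    also have "prob \<dots> = (\<Prod>s\<in>{..<t}. prob (J s -` {p s} \<inter> space M))"
      by (rule indep_setsD[OF indep_sets]) (use False in auto)
    also have "\<dots> = (\<Prod>s\<in>{..<t}. 1 / real CARD('n))"
      using unif by (intro prod.cong refl) (simp add: vimage_def Int_def conj_commute)
    finally show ?thesis by simp
  qed
qed

lemma (in prob_space) AE_tendsto_zero_of_summable_prob:
  fixes Y :: "nat \<Rightarrow> 'a \<Rightarrow> real"
  assumes events: "\<And>\<eta> t. 0 < \<eta> \<Longrightarrow> {\<omega> \<in> space M. \<eta> < Y t \<omega>} \<in> events"
    and nonneg: "\<And>t \<omega>. 0 \<le> Y t \<omega>"
    and summable: "\<And>\<eta>. 0 < \<eta> \<Longrightarrow> summable (\<lambda>t. prob {\<omega> \<in> space M. \<eta> < Y t \<omega>})"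
  shows "AE \<omega> in M. (\<lambda>t. Y t \<omega>) \<longlonglongrightarrow> 0"
proof -
  define A where "A k t = {\<omega> \<in> space M. 1 / real (Suc k) < Y t \<omega>}" for k t
  have "AE \<omega> in M. eventually (\<lambda>t. \<omega> \<in> space M - A k t) sequentially" for k
    unfolding A_def using events summable
    by (intro borel_cantelli_AE1) (auto simp: less_top[symmetric])
  then have "AE \<omega> in M. \<forall>k. eventually (\<lambda>t. \<omega> \<notin> A k t) sequentially"
    by (simp add: AE_all_countable)
  then show ?thesis
  proof (rule AE_mp[OF _ AE_I2], intro impI LIMSEQ_I)
    fix \<omega> and e :: real
    assume \<omega>: "\<omega> \<in> space M" and ev: "\<forall>k. eventually (\<lambda>t. \<omega> \<notin> A k t) sequentially" and "0 < e"
    then obtain k where k: "1 / real (Suc k) < e" by (auto elim: nat_approx_posE)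
    have "eventually (\<lambda>t. norm (Y t \<omega> - 0) < e) sequentially"
      using ev[rule_format, of k] by eventually_elim (use \<omega> k nonneg in \<open>auto simp: A_def\<close>)
    then show "\<exists>t0. \<forall>t\<ge>t0. norm (Y t \<omega> - 0) < e" by (simp add: eventually_sequentially)
  qed
qed

lemma (in prob_space) AE_tendsto_zero_of_path_sums:
  fixes J :: "nat \<Rightarrow> 'a \<Rightarrow> 'n::finite" and X :: "(nat \<Rightarrow> 'n) \<Rightarrow> nat \<Rightarrow> real"
  assumes indep: "indep_vars (\<lambda>_. count_space UNIV) J UNIV"
    and unif: "\<And>t i. prob {\<omega> \<in> space M. J t \<omega> = i} = 1 / real CARD('n)"
    and nonneg: "\<And>p t. 0 \<le> X p t"
    and prefix: "\<And>p p' t. (\<And>s. s < t \<Longrightarrow> p s = p' s) \<Longrightarrow> X p t = X p' t"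
    and path_sums: "\<And>t. (\<Sum>p\<in>index_paths t. X p t) \<le> C * q ^ t"
    and q: "0 \<le> q" "q < real CARD('n)"
  shows "AE \<omega> in M. (\<lambda>t. X (\<lambda>s. J s \<omega>) t) \<longlonglongrightarrow> 0"
proof (rule AE_tendsto_zero_of_summable_prob)
  define N where "N = real CARD('n)"
  define E where "E p t = {\<omega> \<in> space M. \<forall>s<t. J s \<omega> = p s}" for p :: "nat \<Rightarrow> 'n" and t
  define bad where "bad \<eta> t = {p \<in> index_paths t. \<eta> < X p t}" for \<eta> t
  have E: "E p t \<in> events" "prob (E p t) = (1 / N) ^ t" for p t
    unfolding E_def N_def using prefix_event[OF indep unif] by blast+
  have finite_bad: "finite (bad \<eta> t)" for \<eta> t
    unfolding bad_def by (rule finite_subset[OF _ finite_index_paths]) auto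
  have bad_events: "{\<omega> \<in> space M. \<eta> < X (\<lambda>s. J s \<omega>) t} = (\<Union>p\<in>bad \<eta> t. E p t)" for \<eta> t
  proof safe
    fix \<omega> assume "\<omega> \<in> space M" "\<eta> < X (\<lambda>s. J s \<omega>) t"
    moreover have "X (restrict (\<lambda>s. J s \<omega>) {..<t}) t = X (\<lambda>s. J s \<omega>) t"
      by (rule prefix) simp
    ultimately show "\<omega> \<in> (\<Union>p\<in>bad \<eta> t. E p t)"
      unfolding bad_def E_def
      by (intro UN_I[of "restrict (\<lambda>s. J s \<omega>) {..<t}"]) (auto simp: restrict_mem_index_paths)
  next
    fix \<omega> p assume "p \<in> bad \<eta> t" "\<omega> \<in> E p t"
    moreover have "X p t = X (\<lambda>s. J s \<omega>) t"
      using \<open>\<omega> \<in> E p t\<close> unfolding E_def by (intro prefix) auto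
    ultimately show "\<eta> < X (\<lambda>s. J s \<omega>) t" unfolding bad_def by auto
  qed (auto simp: E_def)
  show "{\<omega> \<in> space M. \<eta> < X (\<lambda>s. J s \<omega>) t} \<in> events" for \<eta> t
    unfolding bad_events using finite_bad E by (intro sets.finite_UN) auto
  show "0 \<le> X (\<lambda>s. J s \<omega>) t" for \<omega> t by (rule nonneg)
  fix \<eta> :: real assume "0 < \<eta>"
  \<comment> \<open>Markov's inequality for the uniform measure on paths\<close>
  have Markov: "prob {\<omega> \<in> space M. \<eta> < X (\<lambda>s. J s \<omega>) t} \<le> C / \<eta> * (q / N) ^ t" for t
  proof -
    have "prob (\<Union>p\<in>bad \<eta> t. E p t) \<le> (\<Sum>p\<in>bad \<eta> t. prob (E p t))"
      using finite_bad E by (intro measure_subadditive_finite) auto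
    also have "\<dots> = (\<Sum>p\<in>bad \<eta> t. 1) * (1 / N) ^ t" by (simp add: E)
    also have "\<dots> \<le> (\<Sum>p\<in>index_paths t. X p t / \<eta>) * (1 / N) ^ t"
    proof (rule mult_right_mono)
      have "(\<Sum>p\<in>bad \<eta> t. 1) \<le> (\<Sum>p\<in>bad \<eta> t. X p t / \<eta>)"
        using \<open>0 < \<eta>\<close> by (intro sum_mono) (auto simp: bad_def)
      also have "\<dots> \<le> (\<Sum>p\<in>index_paths t. X p t / \<eta>)"
        using finite_index_paths \<open>0 < \<eta>\<close> nonneg by (intro sum_mono2) (auto simp: bad_def)
      finally show "(\<Sum>p\<in>bad \<eta> t. 1) \<le> (\<Sum>p\<in>index_paths t. X p t / \<eta>)" .
    qed (simp add: N_def)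
    also have "\<dots> \<le> C * q ^ t / \<eta> * (1 / N) ^ t"
      using path_sums[of t] \<open>0 < \<eta>\<close>
      by (intro mult_right_mono) (auto simp: sum_divide_distrib[symmetric] N_def divide_right_mono)
    also have "\<dots> = C / \<eta> * (q / N) ^ t" by (simp add: power_divide)
    finally show ?thesis unfolding bad_events .
  qed
  have "summable (\<lambda>t. C / \<eta> * (q / N) ^ t)"
    using q by (intro summable_mult summable_geometric) (simp add: N_def)
  then show "summable (\<lambda>t. prob {\<omega> \<in> space M. \<eta> < X (\<lambda>s. J s \<omega>) t})"
    by (rule summable_comparison_test'[where N = 0]) (use Markov in simp)
qed

section \<open>Deterministic estimates\<close>

lemma frac_add_mono:
  fixes t T c c' :: real
  assumes "0 \<le> t" "t \<le> T" "0 < c'" "c' \<le> c"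
  shows "t / (t + c) \<le> T / (T + c')"
proof -
  have "t * (T + c') \<le> T * (t + c)"
    using assms mult_mono[of c' c t T] by (simp add: algebra_simps mult.commute)
  then show ?thesis using assms by (simp add: divide_simps)
qed

locale network_newton =
  fixes W :: "real^'n^'n" and \<alpha> \<delta> \<Delta> m M :: real and f f1 f2 :: "'n \<Rightarrow> real \<Rightarrow> real"
  assumes alpha_pos: "0 < \<alpha>"
    and W_sym: "\<forall>i j. W$i$j = W$j$i" and W_nonneg: "\<forall>i j. 0 \<le> W$i$j"
    and W_row_sum: "\<forall>i. (\<Sum>j\<in>UNIV. W$i$j) = 1"
    and delta_le: "\<delta> \<le> \<Delta>" and Delta_lt1: "\<Delta> < 1"
    and W_diag: "\<forall>i. \<delta> \<le> W$i$i \<and> W$i$i \<le> \<Delta>"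
    and f_deriv: "\<forall>i s. (f i has_real_derivative f1 i s) (at s)"
    and f1_deriv: "\<forall>i s. (f1 i has_real_derivative f2 i s) (at s)"
    and m_pos: "0 < m"
    and f2_bounds: "\<forall>i s. m \<le> f2 i s \<and> f2 i s \<le> M"
begin

abbreviation "F \<equiv> Fobj W \<alpha> f"
abbreviation "F_min \<equiv> INF z. F z"
abbreviation "gradF \<equiv> grad W \<alpha> f1"
abbreviation "D \<equiv> Ddiag W \<alpha> f2"
abbreviation "Ainv \<equiv> Hhat_inv W \<alpha> f2"
abbreviation "lam \<equiv> lambda_c \<delta> \<alpha> M"
abbreviation "Lam \<equiv> Lambda_c \<delta> \<Delta> \<alpha> m"
abbreviation "coord_curvature \<equiv> 1 - \<delta> + \<alpha> * M"

lemma m_le_M: "m \<le> M"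
  using f2_bounds by (meson order_trans)

lemma Ddiag_ge: "2 * (1 - \<Delta>) + \<alpha> * m \<le> D x i"
proof -
  have "\<alpha> * m \<le> \<alpha> * f2 i (x$i)" using alpha_pos f2_bounds by simp
  then show ?thesis using conjunct2[OF W_diag[rule_format, of i]] unfolding Ddiag_def by argo
qed

lemma Ddiag_le: "D x i \<le> 2 * (1 - \<delta>) + \<alpha> * M"
proof -
  have "\<alpha> * f2 i (x$i) \<le> \<alpha> * M" using alpha_pos f2_bounds by simp
  then show ?thesis using conjunct1[OF W_diag[rule_format, of i]] unfolding Ddiag_def by argo
qed

lemma lower_denominator_pos: "0 < 2 * (1 - \<Delta>) + \<alpha> * m"
  using Delta_lt1 alpha_pos m_pos by (simp add: add_pos_pos)

lemma Ddiag_pos: "0 < D x i"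
  using Ddiag_ge[of x i] lower_denominator_pos by linarith

lemma Ddiag_nonzero: "D x i \<noteq> 0"
  using Ddiag_pos[of x i] by simp

lemma lam_pos: "0 < lam"
  using Ddiag_pos Ddiag_le unfolding lambda_c_def by (meson order_less_le_trans zero_less_divide_1_iff)

lemma rho_nonneg: "0 \<le> rho_c \<delta> \<alpha> m"
  unfolding rho_c_def using delta_le Delta_lt1 alpha_pos m_pos
  by (intro divide_nonneg_pos) (auto intro: add_pos_pos)

lemma lam_le_Lam: "lam \<le> Lam"
proof -
  have "lam \<le> 1 / (2 * (1 - \<Delta>) + \<alpha> * m)"
    unfolding lambda_c_def
    using delta_le mult_left_mono[OF m_le_M less_imp_le[OF alpha_pos]] lower_denominator_pos
    by (intro frac_le) auto
  also have "\<dots> \<le> Lam"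
    unfolding Lambda_c_def using rho_nonneg lower_denominator_pos by (intro divide_right_mono) auto
  finally show ?thesis .
qed

lemma Lam_pos: "0 < Lam"
  using lam_pos lam_le_Lam by linarith

lemma Hhat_inv_symmetric: "\<forall>i j. Ainv x $ i $ j = Ainv x $ j $ i"
  using Hhat_inv_entry[of W \<alpha> f2 x] Ddiag_pos W_sym by (auto simp: Bmat_entry mult.commute)

lemma Hhat_inv_form_nonneg: "0 \<le> u \<bullet> (Ainv x *v u)"
  unfolding Hhat_inv_form[OF Ddiag_pos]
  using Bmat_form_bounds(1)[OF W_sym W_nonneg W_row_sum] Ddiag_pos
  by (intro add_nonneg_nonneg sum_nonneg) (auto intro: divide_nonneg_pos)

lemma Hhat_inv_form_ge: "lam * (u \<bullet> u) \<le> u \<bullet> (Ainv x *v u)"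
proof -
  have "lam * (u \<bullet> u) = (\<Sum>i\<in>UNIV. lam * (u$i)\<^sup>2)"
    by (simp add: inner_vec_def sum_distrib_left power2_eq_square)
  also have "\<dots> \<le> (\<Sum>i\<in>UNIV. (u$i)\<^sup>2 / D x i)"
  proof (rule sum_mono)
    fix i
    have "lam \<le> 1 / D x i"
      unfolding lambda_c_def using Ddiag_pos[of x i] Ddiag_le[of x i] by (simp add: frac_le)
    then show "lam * (u$i)\<^sup>2 \<le> (u$i)\<^sup>2 / D x i"
      using mult_right_mono[of lam "1 / D x i" "(u$i)\<^sup>2"] by simp
  qed
  also have "\<dots> \<le> u \<bullet> (Ainv x *v u)"
    unfolding Hhat_inv_form[OF Ddiag_pos]
    using Bmat_form_bounds(1)[OF W_sym W_nonneg W_row_sum] by simp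
  finally show ?thesis .
qed

lemma Hhat_inv_entry_bound: "1 / D x i * (1 + 2 * (1 - W$i$i) / D x i) \<le> Lam"
proof -
  have rho: "2 * (1 - W$i$i) / D x i \<le> rho_c \<delta> \<alpha> m"
    unfolding Ddiag_def rho_c_def using W_diag[rule_format, of i] Delta_lt1 alpha_pos m_pos f2_bounds
    by (subst add.commute, intro frac_add_mono) (auto intro: mult_left_mono)
  have inv: "1 / D x i \<le> 1 / (2 * (1 - \<Delta>) + \<alpha> * m)"
    using Ddiag_ge[of x i] lower_denominator_pos by (intro frac_le) auto
  have "0 \<le> 2 * (1 - W$i$i) / D x i"
    using conjunct2[OF W_diag[rule_format, of i]] Delta_lt1 Ddiag_pos[of x i] by simp
  then have "1 / D x i * (1 + 2 * (1 - W$i$i) / D x i)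
      \<le> 1 / (2 * (1 - \<Delta>) + \<alpha> * m) * (1 + rho_c \<delta> \<alpha> m)"
    using inv rho Ddiag_pos[of x i] lower_denominator_pos by (intro mult_mono) auto
  then show ?thesis by (simp add: Lambda_c_def)
qed

lemma Hhat_inv_form_le: "u \<bullet> (Ainv x *v u) \<le> Lam * (u \<bullet> u)"
proof -
  have "u \<bullet> (Ainv x *v u) \<le> (\<Sum>i\<in>UNIV. (u$i)\<^sup>2 / D x i)
     + 2 * (\<Sum>i\<in>UNIV. (1 - W$i$i) * ((\<chi> i. u$i / D x i) $ i)\<^sup>2)"
    unfolding Hhat_inv_form[OF Ddiag_pos]
    by (rule add_left_mono, rule Bmat_form_bounds(2)[OF W_sym W_nonneg W_row_sum])
  also have "\<dots> = (\<Sum>i\<in>UNIV. (u$i)\<^sup>2 * (1 / D x i * (1 + 2 * (1 - W$i$i) / D x i)))"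
    unfolding sum_distrib_left sum.distrib[symmetric]
    by (intro sum.cong refl) (simp add: Ddiag_nonzero field_simps power2_eq_square)
  also have "\<dots> \<le> (\<Sum>i\<in>UNIV. (u$i)\<^sup>2 * Lam)"
    by (intro sum_mono mult_left_mono Hhat_inv_entry_bound) auto
  also have "\<dots> = Lam * (u \<bullet> u)"
    by (simp add: inner_vec_def sum_distrib_left power2_eq_square mult.commute)
  finally show ?thesis .
qed

lemma direction_inner_le: "(Ainv x *v v) \<bullet> (Ainv x *v v) \<le> Lam * (v \<bullet> (Ainv x *v v))"
  using Hhat_inv_symmetric Hhat_inv_form_nonneg Hhat_inv_form_le Lam_pos
  by (intro inner_mult_le_form) auto

lemma Fobj_strongly_convex:
  "F x + gradF x \<bullet> (y - x) + \<alpha> * m / 2 * ((y - x) \<bullet> (y - x)) \<le> F y"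
proof -
  define Q where "Q = mat 1 - W"
  define h where "h = y - x"
  have Q_sym: "\<forall>i j. Q$i$j = Q$j$i" using W_sym by (simp add: Q_def mat_def)
  have quad: "y \<bullet> (Q *v y) = x \<bullet> (Q *v x) + 2 * ((Q *v x) \<bullet> h) + h \<bullet> (Q *v h)"
  proof -
    have "y = x + h" by (simp add: h_def)
    then have "y \<bullet> (Q *v y) = x \<bullet> (Q *v x) + x \<bullet> (Q *v h) + h \<bullet> (Q *v x) + h \<bullet> (Q *v h)"
      by (simp add: matrix_vector_right_distrib inner_add_left inner_add_right)
    then show ?thesis
      by (simp add: inner_matrix_vector_mult_commute[OF Q_sym, of x h] inner_commute)
  qed
  have hQh: "0 \<le> h \<bullet> (Q *v h)"
    unfolding Q_def by (rule laplacian_form_nonneg[OF W_sym W_nonneg W_row_sum])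
  have coord: "f k (x$k) + f1 k (x$k) * h$k + m / 2 * (h$k)\<^sup>2 \<le> f k (y$k)" for k
  proof -
    obtain t where t: "f k (y$k) = f k (x$k) + f1 k (x$k) * (y$k - x$k) + f2 k t / 2 * (y$k - x$k)\<^sup>2"
      using Taylor_second_order f_deriv f1_deriv by metis
    have "m / 2 * (h$k)\<^sup>2 \<le> f2 k t / 2 * (h$k)\<^sup>2"
      using f2_bounds by (intro mult_right_mono divide_right_mono) auto
    then show ?thesis using t by (simp add: h_def)
  qed
  have "(\<Sum>k\<in>UNIV. f k (x$k)) + (\<Sum>k\<in>UNIV. f1 k (x$k) * h$k) + m / 2 * (h \<bullet> h)
      = (\<Sum>k\<in>UNIV. f k (x$k) + f1 k (x$k) * h$k + m / 2 * (h$k)\<^sup>2)"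
    by (simp add: sum.distrib inner_vec_def sum_distrib_left power2_eq_square)
  also have "\<dots> \<le> (\<Sum>k\<in>UNIV. f k (y$k))" by (rule sum_mono) (rule coord)
  finally have sums: "(\<Sum>k\<in>UNIV. f k (x$k)) + (\<Sum>k\<in>UNIV. f1 k (x$k) * h$k) + m / 2 * (h \<bullet> h)
      \<le> (\<Sum>k\<in>UNIV. f k (y$k))" .
  have grad_h: "gradF x \<bullet> h = (Q *v x) \<bullet> h + \<alpha> * (\<Sum>k\<in>UNIV. f1 k (x$k) * h$k)"
    by (simp add: grad_def Q_def inner_add_left inner_vec_def sum_distrib_left
        sum.distrib[symmetric] algebra_simps)
  have "F x + gradF x \<bullet> h + \<alpha> * m / 2 * (h \<bullet> h) = 1/2 * (x \<bullet> (Q *v x)) + (Q *v x) \<bullet> h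
      + \<alpha> * ((\<Sum>k\<in>UNIV. f k (x$k)) + (\<Sum>k\<in>UNIV. f1 k (x$k) * h$k) + m / 2 * (h \<bullet> h))"
    unfolding grad_h Fobj_def Q_def by (simp add: algebra_simps)
  also have "\<dots> \<le> 1/2 * (x \<bullet> (Q *v x)) + (Q *v x) \<bullet> h + 1/2 * (h \<bullet> (Q *v h))
      + \<alpha> * (\<Sum>k\<in>UNIV. f k (y$k))"
    using mult_left_mono[OF sums less_imp_le[OF alpha_pos]] hQh by linarith
  also have "\<dots> = F y"
    unfolding Fobj_def Q_def[symmetric] quad by (simp add: algebra_simps)
  finally show ?thesis by (simp add: h_def)
qed

lemma Fobj_ge_gradient_bound: "F x - (gradF x \<bullet> gradF x) / (2 * (\<alpha> * m)) \<le> F y"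
proof -
  have pos: "0 < 2 * (\<alpha> * m)" using alpha_pos m_pos by simp
  \<comment> \<open>minimise the strong-convexity lower bound over the displacement\<close>
  have "0 \<le> (gradF x + (\<alpha> * m) *\<^sub>R (y - x)) \<bullet> (gradF x + (\<alpha> * m) *\<^sub>R (y - x))"
    by simp
  also have "\<dots> = 2 * (\<alpha> * m) * (gradF x \<bullet> (y - x) + \<alpha> * m / 2 * ((y - x) \<bullet> (y - x)))
      + gradF x \<bullet> gradF x"
    by (simp add: inner_add_left inner_add_right inner_commute power2_eq_square algebra_simps)
  finally have "- (gradF x \<bullet> gradF x) / (2 * (\<alpha> * m))
      \<le> gradF x \<bullet> (y - x) + \<alpha> * m / 2 * ((y - x) \<bullet> (y - x))"
    using pos by (simp add: field_simps)
  then show ?thesis using Fobj_strongly_convex[of x y] by linarith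
qed

lemma F_min_le: "F_min \<le> F x"
  using Fobj_ge_gradient_bound[of 0] by (intro cINF_lower bdd_belowI) auto

lemma gap_le_gradient: "F x - F_min \<le> (gradF x \<bullet> gradF x) / (2 * (\<alpha> * m))"
  using cINF_greatest[of UNIV "F x - (gradF x \<bullet> gradF x) / (2 * (\<alpha> * m))" F]
    Fobj_ge_gradient_bound by auto

lemma Fobj_add_axis_le:
  "F (x + \<tau> *\<^sub>R axis i 1) \<le> F x + \<tau> * gradF x $ i + coord_curvature / 2 * \<tau>\<^sup>2"
proof -
  obtain t where t: "f i (x$i + \<tau>)
      = f i (x$i) + f1 i (x$i) * (x$i + \<tau> - x$i) + f2 i t / 2 * (x$i + \<tau> - x$i)\<^sup>2"
    using Taylor_second_order f_deriv f1_deriv by metis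
  have "f2 i t / 2 * \<tau>\<^sup>2 \<le> M / 2 * \<tau>\<^sup>2"
    using f2_bounds by (intro mult_right_mono divide_right_mono) auto
  then have "\<alpha> * (f i (x$i + \<tau>) - f i (x$i)) \<le> \<alpha> * (f1 i (x$i) * \<tau> + M / 2 * \<tau>\<^sup>2)"
    using t alpha_pos by (intro mult_left_mono) auto
  moreover have "\<tau>\<^sup>2 / 2 * (1 - W$i$i) \<le> \<tau>\<^sup>2 / 2 * (1 - \<delta>)"
    using W_diag by (intro mult_left_mono) auto
  ultimately show ?thesis
    unfolding Fobj_add_axis[OF W_sym] by (simp add: grad_def algebra_simps) argo
qed

end

locale network_newton_stepsize = network_newton W \<alpha> \<delta> \<Delta> m M f f1 f2
  for W :: "real^'n^'n" and \<alpha> \<delta> \<Delta> m M :: real and f f1 f2 :: "'n \<Rightarrow> real \<Rightarrow> real" +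
  fixes \<epsilon> :: real
  assumes eps_pos: "0 < \<epsilon>"
    and eps_le: "\<epsilon> \<le> 2 * (lambda_c \<delta> \<alpha> M / Lambda_c \<delta> \<Delta> \<alpha> m)\<^sup>2"
begin

definition ann_step where
  "ann_step x i = x - \<epsilon> *\<^sub>R ((Phi i ** Ainv x) *v gradF x)"

abbreviation "descent_factor \<equiv> 1 - \<epsilon> * coord_curvature * Lam / 2"
abbreviation "\<kappa> \<equiv> 2 * \<epsilon> * descent_factor * lam * (\<alpha> * m)"

lemma descent_factor_pos: "0 < descent_factor"
proof -
  have "lam * coord_curvature < 1"
    using lam_pos delta_le Delta_lt1 unfolding lambda_c_def by (simp add: field_simps)
  have "\<epsilon> * coord_curvature * Lam \<le> 2 * (lam / Lam)\<^sup>2 * coord_curvature * Lam"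
    \<comment> \<open>the only use of the stepsize bound\<close>
    using eps_le lam_pos Lam_pos alpha_pos m_le_M m_pos delta_le Delta_lt1
    by (intro mult_right_mono) (auto intro: add_nonneg_nonneg)
  also have "\<dots> = 2 * (lam / Lam) * (lam * coord_curvature)"
    using Lam_pos by (simp add: power2_eq_square field_simps)
  also have "\<dots> < 2 * (lam / Lam) * 1"
    using \<open>lam * coord_curvature < 1\<close> lam_pos Lam_pos by (intro mult_strict_left_mono) auto
  also have "\<dots> \<le> 2"
    using lam_le_Lam Lam_pos by (simp add: divide_le_eq)
  finally show ?thesis by simp
qed

lemma kappa_pos: "0 < \<kappa>"
  using eps_pos descent_factor_pos lam_pos alpha_pos m_pos by simp

lemma Fobj_ann_step_le:
  fixes x :: "real^'n"
  defines "d \<equiv> Ainv x *v gradF x"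
  shows "F (ann_step x i) \<le> F x - \<epsilon> * d $ i * gradF x $ i + \<epsilon>\<^sup>2 * coord_curvature / 2 * (d $ i)\<^sup>2"
proof -
  have step: "ann_step x i = x + (- (\<epsilon> * d $ i)) *\<^sub>R axis i 1"
    unfolding ann_step_def Phi_mult_vector d_def by (simp add: algebra_simps)
  show ?thesis
    unfolding step using Fobj_add_axis_le[of x "- (\<epsilon> * d $ i)" i]
    by (simp add: power2_eq_square algebra_simps)
qed

lemma sum_gap_ann_step_le:
  "(\<Sum>i\<in>UNIV. F (ann_step x i) - F_min) \<le> (real CARD('n) - \<kappa>) * (F x - F_min)"
proof -
  define g where "g = gradF x"
  define d where "d = Ainv x *v g"
  have "(\<Sum>i\<in>UNIV. F (ann_step x i))
      \<le> (\<Sum>i\<in>UNIV. F x - \<epsilon> * d $ i * g $ i + \<epsilon>\<^sup>2 * coord_curvature / 2 * (d $ i)\<^sup>2)"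
    unfolding d_def g_def by (intro sum_mono Fobj_ann_step_le)
  also have "\<dots> = (\<Sum>i::'n\<in>UNIV. F x) - \<epsilon> * (\<Sum>i\<in>UNIV. d $ i * g $ i)
      + \<epsilon>\<^sup>2 * coord_curvature / 2 * (\<Sum>i\<in>UNIV. (d $ i)\<^sup>2)"
    by (simp add: sum.distrib sum_subtractf sum_distrib_left mult.assoc)
  also have "\<dots> = real CARD('n) * F x - \<epsilon> * (g \<bullet> d) + \<epsilon>\<^sup>2 * coord_curvature / 2 * (d \<bullet> d)"
    by (simp add: inner_vec_def power2_eq_square mult.commute)
  also have "\<dots> \<le> real CARD('n) * F x - \<epsilon> * (g \<bullet> d) + \<epsilon>\<^sup>2 * coord_curvature / 2 * (Lam * (g \<bullet> d))"
    using direction_inner_le[of x g] alpha_pos m_le_M m_pos delta_le Delta_lt1 unfolding d_def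
    by (intro add_left_mono mult_left_mono) (auto intro: add_nonneg_nonneg)
  also have "\<dots> = real CARD('n) * F x - \<epsilon> * descent_factor * (g \<bullet> d)"
    by (simp add: power2_eq_square algebra_simps)
  finally have decrease:
    "(\<Sum>i\<in>UNIV. F (ann_step x i)) \<le> real CARD('n) * F x - \<epsilon> * descent_factor * (g \<bullet> d)" .
  have "\<kappa> * (F x - F_min) \<le> \<kappa> * ((g \<bullet> g) / (2 * (\<alpha> * m)))"
    using kappa_pos gap_le_gradient[of x] unfolding g_def by (intro mult_left_mono) auto
  also have "\<dots> = \<epsilon> * descent_factor * (lam * (g \<bullet> g))"
    using alpha_pos m_pos by (simp add: field_simps)
  also have "\<dots> \<le> \<epsilon> * descent_factor * (g \<bullet> d)"
    using Hhat_inv_form_ge[of g x] eps_pos descent_factor_pos unfolding d_def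
    by (intro mult_left_mono) auto
  finally have "\<kappa> * (F x - F_min) \<le> \<epsilon> * descent_factor * (g \<bullet> d)" .
  then show ?thesis using decrease by (simp add: sum_subtractf algebra_simps)
qed

abbreviation "iterate \<equiv> ann_iter W \<alpha> f1 f2 \<epsilon>"

lemma iterate_Suc: "iterate x0 p (Suc t) = ann_step (iterate x0 p t) (p t)"
  by (simp add: ann_step_def)

lemma iterate_prefix: "(\<And>s. s < t \<Longrightarrow> p s = p' s) \<Longrightarrow> iterate x0 p t = iterate x0 p' t"
  by (induction t) auto

lemma sum_gap_iterate_le:
  "(\<Sum>p\<in>index_paths t. F (iterate x0 p t) - F_min)
    \<le> max 0 (real CARD('n) - \<kappa>) ^ t * (F x0 - F_min)"
proof (induction t)
  case 0
  show ?case unfolding sum_index_paths_0 by simp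
next
  case (Suc t)
  let ?gap = "\<lambda>x. F x - F_min"
  have "(\<Sum>p\<in>index_paths (Suc t). ?gap (iterate x0 p (Suc t)))
      = (\<Sum>p\<in>index_paths t. \<Sum>i\<in>UNIV. ?gap (ann_step (iterate x0 p t) i))"
    unfolding sum_index_paths_Suc iterate_Suc
    by (intro sum.cong refl arg_cong2[where f = ann_step] arg_cong[where f = ?gap] iterate_prefix) auto
  also have "\<dots> \<le> (\<Sum>p\<in>index_paths t. max 0 (real CARD('n) - \<kappa>) * ?gap (iterate x0 p t))"
    using sum_gap_ann_step_le F_min_le
    by (intro sum_mono order.trans[OF _ mult_right_mono[OF max.cobounded2]]) auto
  also have "\<dots> = max 0 (real CARD('n) - \<kappa>) * (\<Sum>p\<in>index_paths t. ?gap (iterate x0 p t))"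
    by (simp add: sum_distrib_left)
  also have "\<dots> \<le> max 0 (real CARD('n) - \<kappa>) * (max 0 (real CARD('n) - \<kappa>) ^ t * ?gap x0)"
    by (rule mult_left_mono[OF Suc.IH]) simp
  also have "\<dots> = max 0 (real CARD('n) - \<kappa>) ^ Suc t * ?gap x0"
    by simp
  finally show ?case .
qed

lemma AE_Fobj_iterate_tendsto:
  assumes prob: "prob_space P"
    and indep: "prob_space.indep_vars P (\<lambda>_. count_space UNIV) J UNIV"
    and unif: "\<forall>t i. measure P {\<omega> \<in> space P. J t \<omega> = i} = 1 / real CARD('n)"
  shows "AE \<omega> in P. (\<lambda>t. F (iterate x0 (\<lambda>s. J s \<omega>) t)) \<longlonglongrightarrow> F_min"
proof -
  interpret prob_space P by (rule prob)
  have "AE \<omega> in P. (\<lambda>t. F (iterate x0 (\<lambda>s. J s \<omega>) t) - F_min) \<longlonglongrightarrow> 0"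
  proof (rule AE_tendsto_zero_of_path_sums[OF indep])
    show "prob {\<omega> \<in> space P. J t \<omega> = i} = 1 / real CARD('n)" for t i
      using unif by simp
    show "0 \<le> F (iterate x0 p t) - F_min" for p t
      using F_min_le by simp
    show "F (iterate x0 p t) - F_min = F (iterate x0 p' t) - F_min"
      if "\<And>s. s < t \<Longrightarrow> p s = p' s" for p p' t
      using iterate_prefix[OF that] by simp
    show "max 0 (real CARD('n) - \<kappa>) < real CARD('n)"
      using kappa_pos by simp
    show "(\<Sum>p\<in>index_paths t. F (iterate x0 p t) - F_min)
        \<le> (F x0 - F_min) * max 0 (real CARD('n) - \<kappa>) ^ t" for t
      using sum_gap_iterate_le[of x0 t] by (simp add: mult.commute)
  qed simp
  then show ?thesis by eventually_elim (rule LIM_zero_cancel)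
qed

end

theorem theorem4p4:
  fixes W :: "real^'n^'n"
    and \<alpha> \<delta> \<Delta> m M L \<epsilon> :: real
    and f f1 f2 :: "'n \<Rightarrow> real \<Rightarrow> real"
    and x0 :: "real^'n"
    and P :: "'a measure"
    and J :: "nat \<Rightarrow> 'a \<Rightarrow> 'n"
  assumes alpha_pos: "\<alpha> > 0"
    and W_sym: "transpose W = W"
    and W_nonneg: "\<forall>i j. 0 \<le> W $ i $ j"
    and W_lt1: "\<forall>i j. W $ i $ j < 1"
    and W_stoch: "W *v onevec = onevec"
    and W_null: "{v. (mat 1 - W) *v v = 0} = span {onevec}"
    and delta_pos: "0 < \<delta>" and delta_le: "\<delta> \<le> \<Delta>" and Delta_lt1: "\<Delta> < 1"
    and W_diag: "\<forall>i. \<delta> \<le> W $ i $ i \<and> W $ i $ i \<le> \<Delta>"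
    and f_deriv: "\<forall>i s. (f i has_real_derivative f1 i s) (at s)"
    and f1_deriv: "\<forall>i s. (f1 i has_real_derivative f2 i s) (at s)"
    and f2_cont: "\<forall>i. continuous_on UNIV (f2 i)"
    and m_pos: "0 < m"
    and f2_bounds: "\<forall>i s. m \<le> f2 i s \<and> f2 i s \<le> M"
    and f2_lip: "\<forall>i a b. \<bar>f2 i a - f2 i b\<bar> \<le> L * \<bar>a - b\<bar>"
    and eps_pos: "0 < \<epsilon>"
    and eps_le: "\<epsilon> \<le> 2 * (lambda_c \<delta> \<alpha> M / Lambda_c \<delta> \<Delta> \<alpha> m)\<^sup>2"
    and prob: "prob_space P"
    and J_indep: "prob_space.indep_vars P (\<lambda>_. count_space UNIV) J UNIV"
    and J_unif: "\<forall>t i. measure P {\<omega> \<in> space P. J t \<omega> = i} = 1 / real CARD('n)"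
  shows "AE \<omega> in P. (\<lambda>t. Fobj W \<alpha> f (ann_iter W \<alpha> f1 f2 \<epsilon> x0 (\<lambda>s. J s \<omega>) t))
                      \<longlonglongrightarrow> (INF z. Fobj W \<alpha> f z)"
proof -
  interpret network_newton_stepsize W \<alpha> \<delta> \<Delta> m M f f1 f2 \<epsilon>
    using alpha_pos transpose_eq_imp_symmetric[OF W_sym] W_nonneg row_sums_eq_one[OF W_stoch]
      delta_le Delta_lt1 W_diag f_deriv f1_deriv m_pos f2_bounds eps_pos eps_le
    by unfold_locales auto
  show ?thesis by (rule AE_Fobj_iterate_tendsto[OF prob J_indep J_unif])
qed

end
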